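(* Let $\xi\in(0,1)$, let $\rho(x)=\sum_{j\ge2}\rho_jx^{j-1}$ be a degree distribution with average degree $a$ (i.e. $1/a=\int_0^1\rho(x)dx$) and maximal degree at most $k_ca$ for a constant $k_c$. Then for every $x\in(0,\xi]$, $$\frac{d^2}{dx^2}[\rho(1-x)]\le -\frac{k_ca}{1-\xi}\,\frac{d}{dx}[\rho(1-x)].$$
   Context: A degree distribution is a polynomial $\rho(x)=\sum_{j\ge2}\rho_jx^{j-1}$ with $\rho_j\ge0$ and $\sum_j\rho_j=1$; its maximal degree is the largest $j$ with $\rho_j\ne0$. *)

theory Defs
  imports "HOL-Analysis.Analysis"
begin

definition degree_distribution :: "(nat \<Rightarrow> real) \<Rightarrow> bool" where
  "degree_distribution r \<longleftrightarrow>
     (\<forall>j. 0 \<le> r j) \<and> (\<forall>j<2. r j = 0) \<and> finite {j. r j \<noteq> 0} \<and>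
     (\<Sum>j\<in>{j. r j \<noteq> 0}. r j) = 1"

definition dd_poly :: "(nat \<Rightarrow> real) \<Rightarrow> real \<Rightarrow> real" where
  "dd_poly r x = (\<Sum>j\<in>{j. r j \<noteq> 0}. r j * x ^ (j - 1))"

definition max_degree :: "(nat \<Rightarrow> real) \<Rightarrow> nat" where
  "max_degree r = Max {j. r j \<noteq> 0}"

end

theory Submission
  imports Defs
begin

text \<open>Differentiating \<open>\<rho>(1 - x) = \<Sum>\<^sub>j \<rho>\<^sub>j (1 - x)\<^bsup>j-1\<^esup>\<close> termwise, the second derivative
  has the terms \<open>\<rho>\<^sub>j (j-1)(j-2)(1-x)\<^bsup>j-3\<^esup>\<close> and minus the first derivative has the terms
  \<open>\<rho>\<^sub>j (j-1)(1-x)\<^bsup>j-2\<^esup>\<close>. Their ratio is \<open>(j-2)/(1-x)\<close>, which is at most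
  \<open>k\<^sub>c a/(1-\<xi>)\<close> because \<open>j\<close> is at most the maximal degree and \<open>1 - x \<ge> 1 - \<xi>\<close>;
  since all coefficients are nonnegative, the termwise bound sums up.\<close>

lemma has_real_derivative_sum_powers_one_minus:
  fixes c :: "nat \<Rightarrow> real"
  shows "((\<lambda>y. \<Sum>j\<in>S. c j * (1 - y) ^ n j) has_real_derivative
           - (\<Sum>j\<in>S. c j * real (n j) * (1 - y) ^ (n j - 1))) (at y)"
  by (auto intro!: derivative_eq_intros simp: sum_negf[symmetric] mult_ac)

lemma deriv_dd_poly_one_minus:
  "deriv (\<lambda>y. dd_poly r (1 - y)) =
     (\<lambda>y. - (\<Sum>j\<in>{j. r j \<noteq> 0}. r j * real (j - 1) * (1 - y) ^ (j - 2)))"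
proof
  fix y :: real
  show "deriv (\<lambda>y. dd_poly r (1 - y)) y =
          - (\<Sum>j\<in>{j. r j \<noteq> 0}. r j * real (j - 1) * (1 - y) ^ (j - 2))"
    using has_real_derivative_sum_powers_one_minus[where c = r and S = "{j. r j \<noteq> 0}" and n = "\<lambda>j. j - 1"]
    by (intro DERIV_imp_deriv) (simp add: dd_poly_def diff_diff_left numeral_2_eq_2)
qed

lemma deriv2_dd_poly_one_minus:
  "deriv (deriv (\<lambda>y. dd_poly r (1 - y))) x =
     (\<Sum>j\<in>{j. r j \<noteq> 0}. r j * real (j - 1) * (real (j - 2) * (1 - x) ^ (j - 3)))"
  using DERIV_minus[OF has_real_derivative_sum_powers_one_minus
          [where c = "\<lambda>j. r j * real (j - 1)" and S = "{j. r j \<noteq> 0}" and n = "\<lambda>j. j - 2"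
            and y = x]]
  unfolding deriv_dd_poly_one_minus
  by (intro DERIV_imp_deriv) (simp add: diff_diff_left numeral_3_eq_3 numeral_2_eq_2 mult.assoc)

lemma diff_two_mult_power_le:
  fixes s t K :: real
  assumes "0 < s" and "s \<le> t" and "real j \<le> K"
  shows "real (j - 2) * t ^ (j - 3) \<le> K / s * t ^ (j - 2)"
proof (cases "j \<le> 2")
  case True
  have "0 \<le> K" using assms(3) by (meson of_nat_0_le_iff order_trans)
  with True assms(1,2) show ?thesis by simp
next
  case False
  then have "t ^ (j - 2) = t * t ^ (j - 3)"
    by (metis Suc_diff_Suc numeral_2_eq_2 numeral_3_eq_3 not_le power_Suc)
  moreover have "real (j - 2) \<le> K / s * t"
  proof -
    have "real (j - 2) \<le> K" using False assms(3) by simp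
    also have "K \<le> K / s * t"
      using assms False by (simp add: field_simps mult_left_mono)
    finally show ?thesis .
  qed
  moreover have "0 \<le> t ^ (j - 3)"
    using assms(1,2) by simp
  ultimately show ?thesis
    by (metis mult.assoc mult_right_mono)
qed

theorem proposition2:
  fixes r :: "nat \<Rightarrow> real" and \<xi> a k\<^sub>c x :: real
  assumes "0 < \<xi>" and "\<xi> < 1"
    and "degree_distribution r"
    and "1 / a = integral {0..1} (dd_poly r)"
    and "real (max_degree r) \<le> k\<^sub>c * a"
    and "0 < x" and "x \<le> \<xi>"
  shows "deriv (deriv (\<lambda>y. dd_poly r (1 - y))) x
           \<le> - (k\<^sub>c * a / (1 - \<xi>)) * deriv (\<lambda>y. dd_poly r (1 - y)) x"
proof -
  let ?S = "{j. r j \<noteq> 0}"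
  have finite: "finite ?S" and nonneg: "\<And>j. 0 \<le> r j"
    using assms(3) by (auto simp: degree_distribution_def)
  have "deriv (deriv (\<lambda>y. dd_poly r (1 - y))) x =
          (\<Sum>j\<in>?S. r j * real (j - 1) * (real (j - 2) * (1 - x) ^ (j - 3)))"
    by (rule deriv2_dd_poly_one_minus)
  also have "\<dots> \<le> (\<Sum>j\<in>?S. r j * real (j - 1) * (k\<^sub>c * a / (1 - \<xi>) * (1 - x) ^ (j - 2)))"
  proof (intro sum_mono mult_left_mono)
    fix j assume "j \<in> ?S"
    then have "real j \<le> k\<^sub>c * a"
      using finite assms(5) unfolding max_degree_def by (meson Max_ge of_nat_le_iff order_trans)
    then show "real (j - 2) * (1 - x) ^ (j - 3) \<le> k\<^sub>c * a / (1 - \<xi>) * (1 - x) ^ (j - 2)"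
      using assms(2,7) by (intro diff_two_mult_power_le) auto
  qed (simp add: nonneg)
  also have "\<dots> = - (k\<^sub>c * a / (1 - \<xi>)) * deriv (\<lambda>y. dd_poly r (1 - y)) x"
    by (simp add: deriv_dd_poly_one_minus sum_distrib_left sum_negf mult_ac)
  finally show ?thesis .
qed

end
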